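(* Consider the correlation Bell expression $\mathcal B_{Z6}$ with Alice's settings indexed by pairs $(i,j)$, $1\le i<j\le 6$ (15 settings), Bob's settings indexed by $k=1,\dots,6$, and coefficient matrix $M_{(i,j),k}=\delta_{ik}-\delta_{jk}$. Then: (i) its maximal classical (local hidden variable) value is $18$; (ii) its maximal quantum value $Q(M)$ equals $6\sqrt{15}$, attained with $|\psi\rangle=\frac12\sum_{k=1}^4|kk\rangle\in\mathbb{C}^4\otimes\mathbb{C}^4$; (iii) its maximal value over qubits, $\max\sum M_{(i,j),k}\langle\psi|(\vec a_{ij}\cdot\vec\sigma)\otimes(\vec b_k\cdot\vec\sigma^T)|\psi\rangle$ over unit $|\psi\rangle\in\mathbb{C}^2\otimes\mathbb{C}^2$ and $\vec a_{ij},\vec b_k\in S^2$, equals $6(1+2\sqrt2)$. Hence the ratio of the maximal quantum value to the maximal qubit value is $\frac{\sqrt{120}-\sqrt{15}}{7}\approx1.0116>1$, i.e. the maximal quantum violation of this inequality cannot be attained with qubits.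
   Context: The quantum value is $Q(M)=\sup\sum_{(i,j),k}M_{(i,j),k}\langle\psi|A_{ij}\otimes B_k|\psi\rangle$ over all finite $D$, unit $|\psi\rangle\in\mathbb{C}^D\otimes\mathbb{C}^D$ and Hermitian $A_{ij},B_k$ on $\mathbb{C}^D$ with $A_{ij}^2=B_k^2=\mathbb{1}$. The classical value is the maximum of $\sum M_{(i,j),k}a_{ij}b_k$ over $a_{ij},b_k\in\{\pm1\}$. $\vec\sigma=(\sigma_x,\sigma_y,\sigma_z)$ are the Pauli matrices, $\vec\sigma^T$ their transposes, $\vec v\cdot\vec\sigma=\sum_k v_k\sigma_k$; $S^2$ is the unit sphere of $\mathbb{R}^3$. *)

theory Defs
  imports "Jordan_Normal_Form.Matrix"
begin

text \<open>Kronecker (tensor) product. Basis vector |a b> of C^m (x) C^n has index a*n + b.\<close>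
definition kron :: "complex mat \<Rightarrow> complex mat \<Rightarrow> complex mat" where
  "kron A B = mat (dim_row A * dim_row B) (dim_col A * dim_col B)
     (\<lambda>(i, j). A $$ (i div dim_row B, j div dim_col B) * B $$ (i mod dim_row B, j mod dim_col B))"

definition adj :: "complex mat \<Rightarrow> complex mat" where
  "adj A = transpose_mat (map_mat cnj A)"

definition observable :: "nat \<Rightarrow> complex mat \<Rightarrow> bool" where
  "observable D A \<longleftrightarrow> A \<in> carrier_mat D D \<and> adj A = A \<and> A * A = 1\<^sub>m D"

definition unit_vec_c :: "nat \<Rightarrow> complex vec \<Rightarrow> bool" where
  "unit_vec_c n \<psi> \<longleftrightarrow> \<psi> \<in> carrier_vec n \<and> map_vec cnj \<psi> \<bullet> \<psi> = 1"

definition expval :: "complex vec \<Rightarrow> complex mat \<Rightarrow> complex" where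
  "expval \<psi> X = map_vec cnj \<psi> \<bullet> (X *\<^sub>v \<psi>)"

definition classical_value :: "'x set \<Rightarrow> 'y set \<Rightarrow> ('x \<Rightarrow> 'y \<Rightarrow> real) \<Rightarrow> real" where
  "classical_value X Y M = Max {(\<Sum>x\<in>X. \<Sum>y\<in>Y. M x y * a x * b y) | a b.
      (\<forall>x\<in>X. a x \<in> {-1, 1}) \<and> (\<forall>y\<in>Y. b y \<in> {-1, 1})}"

text \<open>Values attainable in local dimension D (the expression is real for observables;
  we take the real part).\<close>
definition quantum_values :: "'x set \<Rightarrow> 'y set \<Rightarrow> ('x \<Rightarrow> 'y \<Rightarrow> real) \<Rightarrow> real set" where
  "quantum_values X Y M = {Re (\<Sum>x\<in>X. \<Sum>y\<in>Y. complex_of_real (M x y) * expval \<psi> (kron (A x) (B y))) |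
      D \<psi> A B. unit_vec_c (D * D) \<psi> \<and> (\<forall>x\<in>X. observable D (A x)) \<and> (\<forall>y\<in>Y. observable D (B y))}"

definition quantum_value :: "'x set \<Rightarrow> 'y set \<Rightarrow> ('x \<Rightarrow> 'y \<Rightarrow> real) \<Rightarrow> real" where
  "quantum_value X Y M = Sup (quantum_values X Y M)"

definition sigma_x :: "complex mat" where
  "sigma_x = mat 2 2 (\<lambda>(i, j). if i \<noteq> j then 1 else 0)"
definition sigma_y :: "complex mat" where
  "sigma_y = mat 2 2 (\<lambda>(i, j). if i = 0 \<and> j = 1 then - \<i> else if i = 1 \<and> j = 0 then \<i> else 0)"
definition sigma_z :: "complex mat" where
  "sigma_z = mat 2 2 (\<lambda>(i, j). if i = j then (if i = 0 then 1 else -1) else 0)"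

definition dot_sigma :: "real \<times> real \<times> real \<Rightarrow> complex mat" where
  "dot_sigma v = (case v of (v1, v2, v3) \<Rightarrow>
     complex_of_real v1 \<cdot>\<^sub>m sigma_x + complex_of_real v2 \<cdot>\<^sub>m sigma_y + complex_of_real v3 \<cdot>\<^sub>m sigma_z)"

definition dot_sigmaT :: "real \<times> real \<times> real \<Rightarrow> complex mat" where
  "dot_sigmaT v = (case v of (v1, v2, v3) \<Rightarrow>
     complex_of_real v1 \<cdot>\<^sub>m transpose_mat sigma_x + complex_of_real v2 \<cdot>\<^sub>m transpose_mat sigma_y
     + complex_of_real v3 \<cdot>\<^sub>m transpose_mat sigma_z)"

definition on_S2 :: "real \<times> real \<times> real \<Rightarrow> bool" where
  "on_S2 v = (case v of (v1, v2, v3) \<Rightarrow> v1\<^sup>2 + v2\<^sup>2 + v3\<^sup>2 = 1)"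

definition qubit_values :: "'x set \<Rightarrow> 'y set \<Rightarrow> ('x \<Rightarrow> 'y \<Rightarrow> real) \<Rightarrow> real set" where
  "qubit_values X Y M = {Re (\<Sum>x\<in>X. \<Sum>y\<in>Y. complex_of_real (M x y) *
        expval \<psi> (kron (dot_sigma (a x)) (dot_sigmaT (b y)))) |
      \<psi> a b. unit_vec_c 4 \<psi> \<and> (\<forall>x\<in>X. on_S2 (a x)) \<and> (\<forall>y\<in>Y. on_S2 (b y))}"

definition Z6_alice :: "(nat \<times> nat) set" where
  "Z6_alice = {(i, j). 1 \<le> i \<and> i < j \<and> j \<le> 6}"

definition Z6_bob :: "nat set" where
  "Z6_bob = {1..6}"

definition Z6_M :: "nat \<times> nat \<Rightarrow> nat \<Rightarrow> real" where
  "Z6_M p k = (case p of (i, j) \<Rightarrow> (if i = k then 1 else 0) - (if j = k then 1 else 0))"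

text \<open>The maximally entangled state (1/2) sum_{k=1}^4 |kk> in C^4 (x) C^4
  (0-based: |kk> has index 4k + k).\<close>
definition psi_max4 :: "complex vec" where
  "psi_max4 = vec 16 (\<lambda>n. if n div 4 = n mod 4 then 1/2 else 0)"

end

theory Submission
  imports Defs
begin

(* The Bell expression B_Z6 has Alice settings (i,j), i<j, and Bob settings k = 1..6, with
   M_(i,j),k = delta_ik - delta_jk; every row of M turns Alice's setting (i,j) into a correlation
   with B_i - B_j, so the value is  sum_{i<j} <A_ij (x) (B_i - B_j)>.

   1. Tensor coordinates: <psi|A (x) B|psi> = <(A (x) 1)psi, (1 (x) B)psi> for Hermitian A, and
      observables act isometrically on one factor.  Weighted AM-GM then bounds each Alice term
      by (l + ||(1 (x) (B_i - B_j))psi||^2 / l) / 2 for every l > 0.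
   2. Pairs of an index set: a symmetric double sum is the diagonal plus twice the sum over pairs;
      hence sum_{i<j} |z_i - z_j|^2 <= n sum_k |z_k|^2.
   3. Classical value 18 (a_ij (b_i - b_j) <= 1 - b_i b_j and (sum b_k)^2 >= 0).
   4. Quantum bound 6 sqrt 15 in every dimension (steps 1-2 with l = 6 / sqrt 15), attained on the
      maximally entangled state of C^4 (x) C^4 by Clifford (gamma-matrix) observables built from a
      regular simplex of six unit vectors in R^5.
   5. Qubit bound 6 (1 + 2 sqrt 2): for Pauli observables the Alice term is at most |b_i - b_j|,
      which a quadratic majorant in t = b_i . b_j controls; summing it needs only the Gram
      constraints sum t_ij >= -3 and sum t_ij^2 >= 3.  The bound is attained by an octahedron. *)

text \<open>Basis index of \<open>|a b\<rangle>\<close> in \<open>\<complex>\<^sup>n \<otimes> \<complex>\<^sup>D\<close> is \<open>a * D + b\<close>; sums over the product basis split accordingly.\<close>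
lemma sum_tensor_index:
  fixes f :: "nat \<Rightarrow> 'a::comm_monoid_add"
  shows "(\<Sum>i<n * D. f i) = (\<Sum>a<n. \<Sum>b<D. f (a * D + b))"
proof -
  have "(\<Sum>i<n * D. f i) = (\<Sum>a<n. sum f {a * D..<a * D + D})"
    using sum.nat_group[of f D n] by simp
  also have "\<dots> = (\<Sum>a<n. \<Sum>b<D. f (a * D + b))"
  proof (rule sum.cong[OF refl])
    fix a show "sum f {a * D..<a * D + D} = (\<Sum>b<D. f (a * D + b))"
      using sum.shift_bounds_nat_ivl[of f 0 "a * D" D] by (simp add: atLeast0LessThan add.commute)
  qed
  finally show ?thesis .
qed

lemma sum_reverse3:
  "(\<Sum>a\<in>I. \<Sum>b\<in>J. \<Sum>c\<in>K. G a b c) = (\<Sum>c\<in>K. \<Sum>b\<in>J. \<Sum>a\<in>I. G a b c)"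
proof -
  have "(\<Sum>a\<in>I. \<Sum>b\<in>J. \<Sum>c\<in>K. G a b c) = (\<Sum>b\<in>J. \<Sum>a\<in>I. \<Sum>c\<in>K. G a b c)"
    by (rule sum.swap)
  also have "\<dots> = (\<Sum>b\<in>J. \<Sum>c\<in>K. \<Sum>a\<in>I. G a b c)"
    by (rule sum.cong[OF refl], rule sum.swap)
  also have "\<dots> = (\<Sum>c\<in>K. \<Sum>b\<in>J. \<Sum>a\<in>I. G a b c)"
    by (rule sum.swap)
  finally show ?thesis .
qed

text \<open>A matrix acting on the first resp. second tensor factor of \<open>\<psi> \<in> \<complex>\<^sup>D \<otimes> \<complex>\<^sup>D\<close>,
  i.e. the coordinates of \<open>(A \<otimes> 1)\<psi>\<close> and \<open>(1 \<otimes> B)\<psi>\<close>, and the squared norm of such a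
  coordinate array.\<close>
definition act_left :: "nat \<Rightarrow> complex mat \<Rightarrow> complex vec \<Rightarrow> nat \<Rightarrow> nat \<Rightarrow> complex" where
  "act_left D A \<psi> a b = (\<Sum>c<D. A $$ (a, c) * \<psi> $ (c * D + b))"

definition act_right :: "nat \<Rightarrow> complex mat \<Rightarrow> complex vec \<Rightarrow> nat \<Rightarrow> nat \<Rightarrow> complex" where
  "act_right D B \<psi> a b = (\<Sum>d<D. B $$ (b, d) * \<psi> $ (a * D + d))"

definition sqnorm :: "nat \<Rightarrow> (nat \<Rightarrow> nat \<Rightarrow> complex) \<Rightarrow> real" where
  "sqnorm D f = (\<Sum>a<D. \<Sum>b<D. Re (cnj (f a b) * f a b))"

lemma sqnorm_cong:
  "(\<And>a b. a < D \<Longrightarrow> b < D \<Longrightarrow> f a b = g a b) \<Longrightarrow> sqnorm D f = sqnorm D g"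
  unfolding sqnorm_def by (intro sum.cong refl) auto

lemma sqnorm_Re: "sqnorm D f = Re (\<Sum>a<D. \<Sum>b<D. cnj (f a b) * f a b)"
  unfolding sqnorm_def by (simp only: Re_sum)

lemma inner_tensor_coords:
  assumes "\<psi> \<in> carrier_vec (D * D)"
  shows "map_vec cnj \<psi> \<bullet> \<psi> = (\<Sum>a<D. \<Sum>b<D. cnj (\<psi> $ (a * D + b)) * \<psi> $ (a * D + b))"
proof -
  have "map_vec cnj \<psi> \<bullet> \<psi> = (\<Sum>i<D * D. cnj (\<psi> $ i) * \<psi> $ i)"
    using assms by (auto simp: scalar_prod_def atLeast0LessThan intro!: sum.cong)
  then show ?thesis by (simp only: sum_tensor_index)
qed

lemma expval_kron:
  assumes psi: "\<psi> \<in> carrier_vec (D * D)" and A: "A \<in> carrier_mat D D" and B: "B \<in> carrier_mat D D"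
  shows "expval \<psi> (kron A B) = (\<Sum>a<D. \<Sum>b<D. cnj (\<psi> $ (a * D + b)) *
           (\<Sum>c<D. \<Sum>d<D. A $$ (a, c) * B $$ (b, d) * \<psi> $ (c * D + d)))"
proof -
  have dims: "dim_row (kron A B) = D * D" "dim_col (kron A B) = D * D"
    using A B by (auto simp: kron_def)
  have entry: "kron A B $$ (i, j) = A $$ (i div D, j div D) * B $$ (i mod D, j mod D)"
    if "i < D * D" "j < D * D" for i j
    using that A B by (auto simp: kron_def)
  have "expval \<psi> (kron A B) = (\<Sum>i<D * D. cnj (\<psi> $ i) *
          (\<Sum>j<D * D. A $$ (i div D, j div D) * B $$ (i mod D, j mod D) * \<psi> $ j))"
    unfolding expval_def scalar_prod_def using psi dims
    by (auto simp: entry atLeast0LessThan scalar_prod_def intro!: sum.cong)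
  then show ?thesis by (simp add: sum_tensor_index)
qed

lemma expval_kron_factor:
  assumes psi: "\<psi> \<in> carrier_vec (D * D)" and A: "A \<in> carrier_mat D D" and B: "B \<in> carrier_mat D D"
    and herm: "\<And>i j. i < D \<Longrightarrow> j < D \<Longrightarrow> A $$ (j, i) = cnj (A $$ (i, j))"
  shows "expval \<psi> (kron A B) = (\<Sum>c<D. \<Sum>b<D. cnj (act_left D A \<psi> c b) * act_right D B \<psi> c b)"
proof -
  have "expval \<psi> (kron A B) = (\<Sum>a<D. \<Sum>b<D. \<Sum>c<D. \<Sum>d<D.
          cnj (\<psi> $ (a * D + b)) * A $$ (a, c) * B $$ (b, d) * \<psi> $ (c * D + d))"
    unfolding expval_kron[OF psi A B] sum_distrib_left by (simp add: mult.assoc)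
  also have "\<dots> = (\<Sum>c<D. \<Sum>b<D. \<Sum>a<D. \<Sum>d<D.
          cnj (\<psi> $ (a * D + b)) * A $$ (a, c) * B $$ (b, d) * \<psi> $ (c * D + d))"
    by (rule sum_reverse3)
  also have "\<dots> = (\<Sum>c<D. \<Sum>b<D. cnj (act_left D A \<psi> c b) * act_right D B \<psi> c b)"
  proof (intro sum.cong refl)
    fix c b assume c: "c \<in> {..<D}"
    have "cnj (act_left D A \<psi> c b) = (\<Sum>a<D. A $$ (a, c) * cnj (\<psi> $ (a * D + b)))"
      unfolding act_left_def cnj_sum using herm[of c] c by (intro sum.cong refl) simp
    then show "(\<Sum>a<D. \<Sum>d<D. cnj (\<psi> $ (a * D + b)) * A $$ (a, c) * B $$ (b, d) * \<psi> $ (c * D + d))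
        = cnj (act_left D A \<psi> c b) * act_right D B \<psi> c b"
      unfolding act_right_def by (simp add: sum_product mult_ac) (rule sum.swap)
  qed
  finally show ?thesis .
qed

lemma sum_sq_orth_columns:
  fixes X :: "nat \<Rightarrow> nat \<Rightarrow> complex" and v :: "nat \<Rightarrow> complex"
  assumes orth: "\<And>d d'. d < D \<Longrightarrow> d' < D \<Longrightarrow> (\<Sum>b<D. cnj (X b d) * X b d') = (if d = d' then c else 0)"
  shows "(\<Sum>b<D. cnj (\<Sum>d<D. X b d * v d) * (\<Sum>d<D. X b d * v d)) = c * (\<Sum>d<D. cnj (v d) * v d)"
proof -
  have "(\<Sum>b<D. cnj (\<Sum>d<D. X b d * v d) * (\<Sum>d<D. X b d * v d))
      = (\<Sum>b<D. \<Sum>d<D. \<Sum>d'<D. (cnj (X b d) * cnj (v d)) * (X b d' * v d'))"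
    unfolding cnj_sum sum_product by simp
  also have "\<dots> = (\<Sum>d<D. \<Sum>b<D. \<Sum>d'<D. (cnj (X b d) * cnj (v d)) * (X b d' * v d'))"
    by (rule sum.swap)
  also have "\<dots> = (\<Sum>d<D. \<Sum>d'<D. \<Sum>b<D. (cnj (X b d) * cnj (v d)) * (X b d' * v d'))"
    by (rule sum.cong[OF refl], rule sum.swap)
  also have "\<dots> = (\<Sum>d<D. \<Sum>d'<D. (cnj (v d) * v d') * (\<Sum>b<D. cnj (X b d) * X b d'))"
    by (simp add: sum_distrib_left mult_ac)
  also have "\<dots> = (\<Sum>d<D. \<Sum>d'<D. (cnj (v d) * v d') * (if d = d' then c else 0))"
    by (intro sum.cong refl) (simp add: orth)
  also have "\<dots> = (\<Sum>d<D. c * (cnj (v d) * v d))"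
    by (intro sum.cong refl) (simp add: if_distrib cong: if_cong)
  also have "\<dots> = c * (\<Sum>d<D. cnj (v d) * v d)"
    by (simp add: sum_distrib_left)
  finally show ?thesis .
qed

lemma unit_vec_tensor_coords:
  assumes "unit_vec_c (D * D) \<psi>"
  shows "(\<Sum>a<D. \<Sum>b<D. cnj (\<psi> $ (a * D + b)) * \<psi> $ (a * D + b)) = 1"
  using assms inner_tensor_coords[of \<psi> D] unfolding unit_vec_c_def by simp

lemma sqnorm_act_right:
  assumes psi: "unit_vec_c (D * D) \<psi>"
    and orth: "\<And>d d'. d < D \<Longrightarrow> d' < D \<Longrightarrow>
      (\<Sum>b<D. cnj (B $$ (b, d)) * B $$ (b, d')) = (if d = d' then complex_of_real c else 0)"
  shows "sqnorm D (act_right D B \<psi>) = c"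
proof -
  have "(\<Sum>a<D. \<Sum>b<D. cnj (act_right D B \<psi> a b) * act_right D B \<psi> a b)
      = (\<Sum>a<D. complex_of_real c * (\<Sum>d<D. cnj (\<psi> $ (a * D + d)) * \<psi> $ (a * D + d)))"
    unfolding act_right_def
    by (rule sum.cong[OF refl], rule sum_sq_orth_columns[where X = "\<lambda>b d. B $$ (b, d)"], rule orth)
  also have "\<dots> = complex_of_real c * (\<Sum>a<D. \<Sum>d<D. cnj (\<psi> $ (a * D + d)) * \<psi> $ (a * D + d))"
    by (simp only: sum_distrib_left)
  finally show ?thesis by (simp add: sqnorm_Re unit_vec_tensor_coords[OF psi])
qed

lemma sqnorm_act_left:
  assumes psi: "unit_vec_c (D * D) \<psi>"
    and orth: "\<And>d d'. d < D \<Longrightarrow> d' < D \<Longrightarrow>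
      (\<Sum>b<D. cnj (A $$ (b, d)) * A $$ (b, d')) = (if d = d' then complex_of_real c else 0)"
  shows "sqnorm D (act_left D A \<psi>) = c"
proof -
  have "(\<Sum>a<D. \<Sum>b<D. cnj (act_left D A \<psi> a b) * act_left D A \<psi> a b)
      = (\<Sum>b<D. \<Sum>a<D. cnj (act_left D A \<psi> a b) * act_left D A \<psi> a b)"
    by (rule sum.swap)
  also have "\<dots> = (\<Sum>b<D. complex_of_real c * (\<Sum>d<D. cnj (\<psi> $ (d * D + b)) * \<psi> $ (d * D + b)))"
    unfolding act_left_def
    by (rule sum.cong[OF refl], rule sum_sq_orth_columns[where X = "\<lambda>b d. A $$ (b, d)"], rule orth)
  also have "\<dots> = complex_of_real c * (\<Sum>a<D. \<Sum>b<D. cnj (\<psi> $ (a * D + b)) * \<psi> $ (a * D + b))"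
    by (simp only: sum_distrib_left) (rule sum.swap)
  finally show ?thesis by (simp add: sqnorm_Re unit_vec_tensor_coords[OF psi])
qed

lemma observable_herm:
  assumes "observable D A" "i < D" "j < D"
  shows "A $$ (j, i) = cnj (A $$ (i, j))"
proof -
  have A: "A \<in> carrier_mat D D" and self_adj: "adj A = A"
    using assms(1) unfolding observable_def by auto
  have "adj A $$ (j, i) = cnj (A $$ (i, j))"
    using A assms(2,3) unfolding adj_def by simp
  then show ?thesis unfolding self_adj .
qed

lemma observable_columns:
  assumes obs: "observable D A" and "d < D" "d' < D"
  shows "(\<Sum>b<D. cnj (A $$ (b, d)) * A $$ (b, d')) = (if d = d' then 1 else 0)"
proof -
  have A: "A \<in> carrier_mat D D" and sq: "A * A = 1\<^sub>m D"
    using obs unfolding observable_def by auto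
  have "(\<Sum>b<D. cnj (A $$ (b, d)) * A $$ (b, d')) = (\<Sum>b<D. A $$ (d, b) * A $$ (b, d'))"
  proof (rule sum.cong[OF refl])
    fix b assume "b \<in> {..<D}"
    then have "A $$ (b, d) = cnj (A $$ (d, b))"
      using observable_herm[OF obs] \<open>d < D\<close> by blast
    then show "cnj (A $$ (b, d)) * A $$ (b, d') = A $$ (d, b) * A $$ (b, d')" by simp
  qed
  also have "\<dots> = (A * A) $$ (d, d')"
    using A assms(2,3) by (auto simp: scalar_prod_def atLeast0LessThan)
  finally show ?thesis using sq assms(2,3) by simp
qed

lemma Re_cnj_mult_le:
  fixes p r :: complex and l :: real
  assumes "l > 0"
  shows "Re (cnj p * r) \<le> (l * Re (cnj p * p) + Re (cnj r * r) / l) / 2"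
proof -
  have "0 \<le> (l * Re p - Re r)\<^sup>2 + (l * Im p - Im r)\<^sup>2" by simp
  then have "2 * l * (Re p * Re r + Im p * Im r) \<le> l * (l * ((Re p)\<^sup>2 + (Im p)\<^sup>2)) + ((Re r)\<^sup>2 + (Im r)\<^sup>2)"
    by (simp add: power2_eq_square algebra_simps)
  then have "Re p * Re r + Im p * Im r \<le> (l * ((Re p)\<^sup>2 + (Im p)\<^sup>2) + ((Re r)\<^sup>2 + (Im r)\<^sup>2) / l) / 2"
    using assms by (simp add: field_simps)
  then show ?thesis by (simp add: power2_eq_square)
qed

text \<open>The key estimate for one Alice setting: for an observable \<open>A\<close> and any \<open>l > 0\<close>,
  \<open>Re \<langle>A \<otimes> (B\<^sub>1 - B\<^sub>2)\<rangle> \<le> (l + \<parallel>(1 \<otimes> (B\<^sub>1 - B\<^sub>2))\<psi>\<parallel>\<^sup>2 / l) / 2\<close>,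
  by Cauchy--Schwarz in the form of weighted AM--GM.\<close>
lemma expval_diff_le:
  assumes psi: "unit_vec_c (D * D) \<psi>" and A: "observable D A"
    and B1: "B1 \<in> carrier_mat D D" and B2: "B2 \<in> carrier_mat D D" and l: "l > 0"
  shows "Re (expval \<psi> (kron A B1) - expval \<psi> (kron A B2)) \<le>
     (l + sqnorm D (\<lambda>a b. act_right D B1 \<psi> a b - act_right D B2 \<psi> a b) / l) / 2"
proof -
  let ?p = "act_left D A \<psi>" and ?r = "\<lambda>a b. act_right D B1 \<psi> a b - act_right D B2 \<psi> a b"
  have carrier: "\<psi> \<in> carrier_vec (D * D)" and A_car: "A \<in> carrier_mat D D"
    using psi A unfolding unit_vec_c_def observable_def by auto
  have p_norm: "sqnorm D ?p = 1"
    by (rule sqnorm_act_left[OF psi]) (simp add: observable_columns[OF A])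
  have "expval \<psi> (kron A B1) - expval \<psi> (kron A B2) = (\<Sum>a<D. \<Sum>b<D. cnj (?p a b) * ?r a b)"
  proof -
    have e: "expval \<psi> (kron A B) = (\<Sum>a<D. \<Sum>b<D. cnj (?p a b) * act_right D B \<psi> a b)"
      if "B \<in> carrier_mat D D" for B
      by (rule expval_kron_factor[OF carrier A_car that]) (rule observable_herm[OF A])
    show ?thesis
      unfolding e[OF B1] e[OF B2] by (simp only: sum_subtractf[symmetric] right_diff_distrib)
  qed
  then have "Re (expval \<psi> (kron A B1) - expval \<psi> (kron A B2)) = (\<Sum>a<D. \<Sum>b<D. Re (cnj (?p a b) * ?r a b))"
    by simp
  also have "\<dots> \<le> (\<Sum>a<D. \<Sum>b<D. (l * Re (cnj (?p a b) * ?p a b) + Re (cnj (?r a b) * ?r a b) / l) / 2)"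
    by (intro sum_mono Re_cnj_mult_le l)
  also have "\<dots> = (l * sqnorm D ?p + sqnorm D ?r / l) / 2"
  proof -
    have "(\<Sum>a<D. \<Sum>b<D. (l * X a b + Y a b / l) / 2)
        = (l * (\<Sum>a<D. \<Sum>b<D. X a b) + (\<Sum>a<D. \<Sum>b<D. Y a b) / l) / 2" for X Y :: "nat \<Rightarrow> nat \<Rightarrow> real"
      by (simp add: sum.distrib sum_divide_distrib[symmetric] sum_distrib_left add_divide_distrib)
    then show ?thesis unfolding sqnorm_def .
  qed
  finally show ?thesis unfolding p_norm by simp
qed

definition pairs :: "nat set \<Rightarrow> (nat \<times> nat) set" where
  "pairs K = {(i, j). i \<in> K \<and> j \<in> K \<and> i < j}"

lemma finite_pairs: "finite K \<Longrightarrow> finite (pairs K)"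
  by (rule finite_subset[of _ "K \<times> K"]) (auto simp: pairs_def)

lemma sum_symmetric_pairs:
  fixes f :: "nat \<Rightarrow> nat \<Rightarrow> real"
  assumes K: "finite K" and sym: "\<And>i j. f i j = f j i"
  shows "(\<Sum>i\<in>K. \<Sum>j\<in>K. f i j) = (\<Sum>i\<in>K. f i i) + 2 * (\<Sum>p\<in>pairs K. f (fst p) (snd p))"
proof -
  let ?g = "\<lambda>p. f (fst p) (snd p)"
  let ?diag = "(\<lambda>i. (i, i)) ` K"
  have split: "K \<times> K = (pairs K \<union> prod.swap ` pairs K) \<union> ?diag"
    by (auto simp: pairs_def image_iff)
  have fin: "finite (pairs K)" "finite ?diag" using K by (auto intro: finite_pairs)
  have swap: "sum ?g (prod.swap ` pairs K) = sum ?g (pairs K)"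
    by (subst sum.reindex) (auto simp: sym)
  have diag: "sum ?g ?diag = (\<Sum>i\<in>K. f i i)"
    by (subst sum.reindex) (auto intro: inj_onI)
  have "(\<Sum>i\<in>K. \<Sum>j\<in>K. f i j) = sum ?g (K \<times> K)"
    by (simp add: sum.cartesian_product case_prod_beta)
  also have "\<dots> = sum ?g (pairs K) + sum ?g (prod.swap ` pairs K) + sum ?g ?diag"
    unfolding split using fin by (subst sum.union_disjoint, auto simp: pairs_def)+
  finally show ?thesis using swap diag by simp
qed

text \<open>For complex numbers \<open>z\<^sub>k\<close>, \<open>\<Sum>\<^sub>i\<^sub><\<^sub>j |z\<^sub>i - z\<^sub>j|\<^sup>2 = n \<Sum> |z\<^sub>k|\<^sup>2 - |\<Sum> z\<^sub>k|\<^sup>2 \<le> n \<Sum> |z\<^sub>k|\<^sup>2\<close>.\<close>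
lemma sum_pairs_sq_diff_le:
  fixes z :: "nat \<Rightarrow> complex"
  assumes K: "finite K"
  shows "(\<Sum>p\<in>pairs K. Re (cnj (z (fst p) - z (snd p)) * (z (fst p) - z (snd p))))
    \<le> card K * (\<Sum>k\<in>K. Re (cnj (z k) * z k))"
proof -
  define n where "n w = Re (cnj w * w)" for w
  define c where "c i j = Re (cnj (z i) * z j)" for i j
  have expand: "n (z i - z j) = n (z i) + n (z j) - c i j - c j i" for i j
    unfolding n_def c_def by (simp add: algebra_simps)
  have nonneg: "0 \<le> n w" for w
    unfolding n_def by simp
  have cross: "(\<Sum>i\<in>K. \<Sum>j\<in>K. c i j) = n (\<Sum>k\<in>K. z k)"
    unfolding n_def c_def by (simp add: cnj_sum sum_product Re_sum)
  have "2 * (\<Sum>p\<in>pairs K. n (z (fst p) - z (snd p))) = (\<Sum>i\<in>K. \<Sum>j\<in>K. n (z i - z j))"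
    using sum_symmetric_pairs[OF K, of "\<lambda>i j. n (z i - z j)"] by (simp add: n_def algebra_simps)
  also have "\<dots> = (\<Sum>i\<in>K. \<Sum>j\<in>K. n (z i)) + (\<Sum>i\<in>K. \<Sum>j\<in>K. n (z j))
      - (\<Sum>i\<in>K. \<Sum>j\<in>K. c i j) - (\<Sum>i\<in>K. \<Sum>j\<in>K. c j i)"
    by (simp only: expand sum.distrib sum_subtractf)
  also have "\<dots> = 2 * (card K * (\<Sum>k\<in>K. n (z k))) - 2 * n (\<Sum>k\<in>K. z k)"
    using cross sum.swap[of "\<lambda>i j. c j i" K K] by (simp add: sum_distrib_left[symmetric] sum.swap[of "\<lambda>i j. n (z j)"])
  also have "\<dots> \<le> 2 * (card K * (\<Sum>k\<in>K. n (z k)))"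
    using nonneg[of "\<Sum>k\<in>K. z k"] by simp
  finally show ?thesis unfolding n_def by simp
qed

lemma Z6_alice_pairs: "Z6_alice = pairs Z6_bob"
  by (auto simp: Z6_alice_def Z6_bob_def pairs_def)

lemma finite_Z6_bob: "finite Z6_bob" and card_Z6_bob: "card Z6_bob = 6"
  by (simp_all add: Z6_bob_def)

lemma Z6_alice_eq:
  "Z6_alice = {(1,2),(1,3),(1,4),(1,5),(1,6),(2,3),(2,4),(2,5),(2,6),(3,4),(3,5),(3,6),(4,5),(4,6),(5,6)}"
proof (rule Set.set_eqI, rule iffI)
  fix x assume "x \<in> Z6_alice"
  then obtain i j where x: "x = (i, j)" and ij: "1 \<le> i" "i < j" "j \<le> 6"
    unfolding Z6_alice_def by auto
  have cases6: "k = 0 \<or> k = 1 \<or> k = 2 \<or> k = 3 \<or> k = 4 \<or> k = 5 \<or> k = 6" if "k \<le> 6" for k :: nat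
    using that by arith
  have "i \<le> 6" "j \<le> 6" using ij by auto
  from cases6[OF this(1)] cases6[OF this(2)] ij show
    "x \<in> {(1,2),(1,3),(1,4),(1,5),(1,6),(2,3),(2,4),(2,5),(2,6),(3,4),(3,5),(3,6),(4,5),(4,6),(5,6)}"
    unfolding x by (elim disjE; simp)
qed (auto simp: Z6_alice_def)

lemma card_Z6_alice: "card Z6_alice = 15"
  unfolding Z6_alice_eq by simp

lemma Z6_row_sum:
  fixes F :: "nat \<Rightarrow> 'a::real_algebra_1"
  assumes "x \<in> Z6_alice"
  shows "(\<Sum>y\<in>Z6_bob. of_real (Z6_M x y) * F y) = F (fst x) - F (snd x)"
proof -
  obtain i j where x: "x = (i, j)" by (cases x)
  with assms have ij: "i \<in> Z6_bob" "j \<in> Z6_bob" unfolding Z6_alice_def Z6_bob_def by auto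
  have "(\<Sum>y\<in>Z6_bob. of_real (Z6_M x y) * F y)
      = (\<Sum>y\<in>Z6_bob. (if i = y then F y else 0) - (if j = y then F y else 0))"
    unfolding x Z6_M_def by (intro sum.cong refl) (auto simp: left_diff_distrib)
  also have "\<dots> = F i - F j" using ij by (simp add: sum_subtractf Z6_bob_def)
  finally show ?thesis using x by simp
qed

lemma Z6_value:
  fixes F :: "nat \<times> nat \<Rightarrow> nat \<Rightarrow> 'a::real_algebra_1"
  shows "(\<Sum>x\<in>Z6_alice. \<Sum>y\<in>Z6_bob. of_real (Z6_M x y) * F x y)
    = (\<Sum>x\<in>Z6_alice. F x (fst x) - F x (snd x))"
  by (intro sum.cong refl Z6_row_sum)

lemma finite_classical_values:
  fixes M :: "'x \<Rightarrow> 'y \<Rightarrow> real"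
  assumes X: "finite X" and Y: "finite Y"
  shows "finite {(\<Sum>x\<in>X. \<Sum>y\<in>Y. M x y * a x * b y) | a b.
      (\<forall>x\<in>X. a x \<in> {-1, 1}) \<and> (\<forall>y\<in>Y. b y \<in> {-1, 1})}"
proof -
  let ?v = "\<lambda>(a, b). (\<Sum>x\<in>X. \<Sum>y\<in>Y. M x y * a x * b y)"
  let ?strategies = "PiE X (\<lambda>_. {-1, 1::real}) \<times> PiE Y (\<lambda>_. {-1, 1::real})"
  have "{(\<Sum>x\<in>X. \<Sum>y\<in>Y. M x y * a x * b y) | a b.
      (\<forall>x\<in>X. a x \<in> {-1, 1}) \<and> (\<forall>y\<in>Y. b y \<in> {-1, 1})} \<subseteq> ?v ` ?strategies"
  proof clarify
    fix a b :: "_ \<Rightarrow> real"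
    assume a: "\<forall>x\<in>X. a x \<in> {-1, 1}" and b: "\<forall>y\<in>Y. b y \<in> {-1, 1}"
    have "(\<Sum>x\<in>X. \<Sum>y\<in>Y. M x y * a x * b y) = ?v (restrict a X, restrict b Y)"
      by (auto intro!: sum.cong)
    moreover have "(restrict a X, restrict b Y) \<in> ?strategies" using a b by auto
    ultimately show "(\<Sum>x\<in>X. \<Sum>y\<in>Y. M x y * a x * b y) \<in> ?v ` ?strategies" by blast
  qed
  moreover have "finite (?v ` ?strategies)" using X Y by (intro finite_imageI finite_cartesian_product finite_PiE) auto
  ultimately show ?thesis by (rule finite_subset)
qed

text \<open>Classical bound: with \<open>a\<^sub>i\<^sub>j (b\<^sub>i - b\<^sub>j) \<le> 1 - b\<^sub>i b\<^sub>j\<close> and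
  \<open>0 \<le> (\<Sum> b\<^sub>k)\<^sup>2 = 6 + 2 \<Sum>\<^sub>i\<^sub><\<^sub>j b\<^sub>i b\<^sub>j\<close>, the value is at most \<open>15 + 3 = 18\<close>.\<close>
lemma Z6_classical_bound:
  assumes a: "\<forall>x\<in>Z6_alice. a x \<in> {-1, 1::real}" and b: "\<forall>y\<in>Z6_bob. b y \<in> {-1, 1::real}"
  shows "(\<Sum>x\<in>Z6_alice. \<Sum>y\<in>Z6_bob. Z6_M x y * a x * b y) \<le> 18"
proof -
  let ?P = "\<Sum>p\<in>Z6_alice. b (fst p) * b (snd p)"
  have b_in: "fst x \<in> Z6_bob" "snd x \<in> Z6_bob" if "x \<in> Z6_alice" for x
    using that by (auto simp: Z6_alice_pairs pairs_def)
  have "(\<Sum>x\<in>Z6_alice. \<Sum>y\<in>Z6_bob. Z6_M x y * a x * b y) = (\<Sum>x\<in>Z6_alice. a x * (b (fst x) - b (snd x)))"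
    using Z6_value[of "\<lambda>x y. a x * b y"] by (simp add: mult.assoc right_diff_distrib)
  also have "\<dots> \<le> (\<Sum>x\<in>Z6_alice. 1 - b (fst x) * b (snd x))"
  proof (rule sum_mono)
    fix x assume "x \<in> Z6_alice"
    then have "a x \<in> {-1, 1}" "b (fst x) \<in> {-1, 1}" "b (snd x) \<in> {-1, 1}"
      using a b b_in by auto
    then show "a x * (b (fst x) - b (snd x)) \<le> 1 - b (fst x) * b (snd x)"
      by auto
  qed
  also have "\<dots> = 15 - ?P" by (simp add: sum_subtractf card_Z6_alice)
  also have "\<dots> \<le> 18"
  proof -
    have "(\<Sum>k\<in>Z6_bob. b k)\<^sup>2 = (\<Sum>i\<in>Z6_bob. \<Sum>j\<in>Z6_bob. b i * b j)"
      by (simp add: power2_eq_square sum_product)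
    also have "\<dots> = (\<Sum>i\<in>Z6_bob. b i * b i) + 2 * ?P"
      unfolding Z6_alice_pairs by (rule sum_symmetric_pairs[OF finite_Z6_bob]) simp
    also have "(\<Sum>i\<in>Z6_bob. b i * b i) = 6"
    proof -
      have "(\<Sum>i\<in>Z6_bob. b i * b i) = (\<Sum>i\<in>Z6_bob. 1)"
        using b by (intro sum.cong refl) auto
      then show ?thesis by (simp add: card_Z6_bob)
    qed
    finally have "0 \<le> 6 + 2 * ?P" by (metis zero_le_power2)
    then show ?thesis by simp
  qed
  finally show ?thesis .
qed

text \<open>The bound is attained by \<open>a \<equiv> 1\<close>, \<open>b = (1, 1, 1, -1, -1, -1)\<close> (nine pairs contribute 2).\<close>
lemma Z6_classical_value: "classical_value Z6_alice Z6_bob Z6_M = 18"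
proof -
  define b :: "nat \<Rightarrow> real" where "b k = (if k \<le> 3 then 1 else -1)" for k
  have "(\<Sum>x\<in>Z6_alice. \<Sum>y\<in>Z6_bob. Z6_M x y * 1 * b y) = (\<Sum>x\<in>Z6_alice. b (fst x) - b (snd x))"
    using Z6_value[of "\<lambda>x y. b y"] by simp
  also have "\<dots> = 18" unfolding Z6_alice_eq b_def by simp
  finally have attained: "18 \<in> {(\<Sum>x\<in>Z6_alice. \<Sum>y\<in>Z6_bob. Z6_M x y * a x * b y) | a b.
      (\<forall>x\<in>Z6_alice. a x \<in> {-1, 1}) \<and> (\<forall>y\<in>Z6_bob. b y \<in> {-1, 1})}"
    by (intro CollectI exI[of _ "\<lambda>_. 1"] exI[of _ b]) (auto simp: b_def)
  show ?thesis
    unfolding classical_value_def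
    by (rule Max_eqI[OF finite_classical_values[OF _ finite_Z6_bob]])
       (use attained Z6_classical_bound in \<open>auto simp: Z6_alice_pairs finite_pairs finite_Z6_bob\<close>)
qed

lemma sqnorm_pairs_diff_le:
  fixes q :: "nat \<Rightarrow> nat \<Rightarrow> nat \<Rightarrow> complex"
  assumes K: "finite K"
  shows "(\<Sum>p\<in>pairs K. sqnorm D (\<lambda>a b. q (fst p) a b - q (snd p) a b))
    \<le> card K * (\<Sum>k\<in>K. sqnorm D (q k))"
proof -
  have "(\<Sum>p\<in>pairs K. sqnorm D (\<lambda>a b. q (fst p) a b - q (snd p) a b))
      = (\<Sum>a<D. \<Sum>b<D. \<Sum>p\<in>pairs K.
          Re (cnj (q (fst p) a b - q (snd p) a b) * (q (fst p) a b - q (snd p) a b)))"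
    unfolding sqnorm_def by (subst sum.swap) (rule sum.cong[OF refl], rule sum.swap)
  also have "\<dots> \<le> (\<Sum>a<D. \<Sum>b<D. card K * (\<Sum>k\<in>K. Re (cnj (q k a b) * q k a b)))"
    by (intro sum_mono sum_pairs_sq_diff_le[OF K])
  also have "\<dots> = card K * (\<Sum>k\<in>K. sqnorm D (q k))"
    unfolding sqnorm_def sum_distrib_left[symmetric]
    by (subst (2) sum.swap) (rule arg_cong[where f = "(*) _"], rule sum.cong[OF refl], rule sum.swap)
  finally show ?thesis .
qed

text \<open>Tsirelson-type bound: optimising \<open>l\<close> in the one-setting estimate gives
  \<open>\<B>\<^sub>Z\<^sub>6 \<le> (15 l + 36 / l) / 2 = 6 \<surd>15\<close> in every dimension.\<close>
lemma Z6_quantum_bound: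
  assumes psi: "unit_vec_c (D * D) \<psi>"
    and A: "\<forall>x\<in>Z6_alice. observable D (A x)" and B: "\<forall>y\<in>Z6_bob. observable D (B y)"
  shows "Re (\<Sum>x\<in>Z6_alice. \<Sum>y\<in>Z6_bob. complex_of_real (Z6_M x y) * expval \<psi> (kron (A x) (B y)))
    \<le> 6 * sqrt 15"
proof -
  define l :: real where "l = 6 / sqrt 15"
  have l: "l > 0" unfolding l_def by simp
  define N where "N x = sqnorm D (\<lambda>a b. act_right D (B (fst x)) \<psi> a b - act_right D (B (snd x)) \<psi> a b)" for x
  have B_car: "B y \<in> carrier_mat D D" if "y \<in> Z6_bob" for y
    using B that unfolding observable_def by auto
  have ends: "fst x \<in> Z6_bob" "snd x \<in> Z6_bob" if "x \<in> Z6_alice" for x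
    using that by (auto simp: Z6_alice_pairs pairs_def)
  have "Re (\<Sum>x\<in>Z6_alice. \<Sum>y\<in>Z6_bob. complex_of_real (Z6_M x y) * expval \<psi> (kron (A x) (B y)))
      = (\<Sum>x\<in>Z6_alice. Re (expval \<psi> (kron (A x) (B (fst x))) - expval \<psi> (kron (A x) (B (snd x)))))"
    unfolding Z6_value by (simp only: Re_sum)
  also have "\<dots> \<le> (\<Sum>x\<in>Z6_alice. (l + N x / l) / 2)"
    unfolding N_def using A B_car ends by (intro sum_mono expval_diff_le[OF psi _ _ _ l]) auto
  also have "\<dots> = (15 * l + (\<Sum>x\<in>Z6_alice. N x) / l) / 2"
    by (simp add: sum_divide_distrib[symmetric] sum.distrib add_divide_distrib card_Z6_alice)
  also have "(\<Sum>x\<in>Z6_alice. N x) \<le> 36"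
  proof -
    have "(\<Sum>x\<in>Z6_alice. N x) \<le> 6 * (\<Sum>k\<in>Z6_bob. sqnorm D (act_right D (B k) \<psi>))"
      unfolding N_def Z6_alice_pairs using sqnorm_pairs_diff_le[OF finite_Z6_bob]
      by (simp add: card_Z6_bob)
    also have "(\<Sum>k\<in>Z6_bob. sqnorm D (act_right D (B k) \<psi>)) = (\<Sum>k\<in>Z6_bob. 1)"
      using B by (intro sum.cong refl sqnorm_act_right[OF psi]) (simp add: observable_columns)
    finally show ?thesis by (simp add: card_Z6_bob)
  qed
  then have "(15 * l + (\<Sum>x\<in>Z6_alice. N x) / l) / 2 \<le> (15 * l + 36 / l) / 2"
    using l by (simp add: divide_right_mono)
  also have "(15 * l + 36 / l) / 2 = 6 * sqrt 15"
    unfolding l_def by (simp add: field_simps)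
  finally show ?thesis by simp
qed

lemma expval_maxent:
  assumes psi: "\<psi> \<in> carrier_vec (D * D)" and A: "A \<in> carrier_mat D D" and B: "B \<in> carrier_mat D D"
    and ent: "\<And>a b. a < D \<Longrightarrow> b < D \<Longrightarrow> \<psi> $ (a * D + b) = (if a = b then k else 0)"
  shows "expval \<psi> (kron A B) = cnj k * k * (\<Sum>a<D. \<Sum>c<D. A $$ (a, c) * B $$ (a, c))"
proof -
  have "expval \<psi> (kron A B) = (\<Sum>a<D. \<Sum>b<D. (if a = b then cnj k else 0) *
           (\<Sum>c<D. \<Sum>d<D. A $$ (a, c) * B $$ (b, d) * (if c = d then k else 0)))"
    unfolding expval_kron[OF psi A B] by (intro sum.cong refl) (simp add: ent)
  also have "\<dots> = (\<Sum>a<D. cnj k * (\<Sum>c<D. A $$ (a, c) * B $$ (a, c) * k))"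
    by (simp add: if_distrib[of "\<lambda>z. z * _"] if_distrib[of "\<lambda>z. _ * z"] sum.delta cong: if_cong)
  also have "\<dots> = cnj k * k * (\<Sum>a<D. \<Sum>c<D. A $$ (a, c) * B $$ (a, c))"
    by (simp add: sum_distrib_left sum_distrib_right mult_ac)
  finally show ?thesis .
qed

lemma sum_lessThan_4: "(\<Sum>k<4::nat. f k) = f 0 + f 1 + f 2 + f 3"
  by (simp add: eval_nat_numeral)

lemma less_4_cases: "(i::nat) < 4 \<Longrightarrow> i = 0 \<or> i = 1 \<or> i = 2 \<or> i = 3"
  by arith

lemma psi_max4_coords: "a < 4 \<Longrightarrow> b < 4 \<Longrightarrow> psi_max4 $ (a * 4 + b) = (if a = b then 1 / 2 else 0)"
  unfolding psi_max4_def by simp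

lemma psi_max4_carrier: "psi_max4 \<in> carrier_vec (4 * 4)"
  unfolding psi_max4_def by simp

lemma psi_max4_unit: "unit_vec_c (4 * 4) psi_max4"
  unfolding unit_vec_c_def inner_tensor_coords[OF psi_max4_carrier]
  using psi_max4_carrier by (simp add: sum_lessThan_4 psi_max4_coords)

text \<open>Five pairwise anticommuting Hermitian involutions on \<open>\<complex>\<^sup>4\<close> (a Clifford algebra basis):
  \<open>gamma u = \<Sum>\<^sub>m\<^sub><\<^sub>5 u\<^sub>m \<Gamma>\<^sub>m\<close> for \<open>u \<in> \<real>\<^sup>5\<close>, and its transpose \<open>gammaT u\<close>.\<close>
definition gamma_entries :: "(nat \<Rightarrow> real) \<Rightarrow> complex list list" where
  "gamma_entries u =
    [[of_real (u 4), of_real (u 2) - \<i> * of_real (u 3), of_real (u 0) - \<i> * of_real (u 1), 0],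
     [of_real (u 2) + \<i> * of_real (u 3), - of_real (u 4), 0, of_real (u 0) - \<i> * of_real (u 1)],
     [of_real (u 0) + \<i> * of_real (u 1), 0, - of_real (u 4), - (of_real (u 2) - \<i> * of_real (u 3))],
     [0, of_real (u 0) + \<i> * of_real (u 1), - (of_real (u 2) + \<i> * of_real (u 3)), of_real (u 4)]]"

definition gamma :: "(nat \<Rightarrow> real) \<Rightarrow> complex mat" where
  "gamma u = mat 4 4 (\<lambda>(i, j). gamma_entries u ! i ! j)"

definition gammaT :: "(nat \<Rightarrow> real) \<Rightarrow> complex mat" where
  "gammaT u = mat 4 4 (\<lambda>(i, j). gamma_entries u ! j ! i)"

definition sqnorm5 :: "(nat \<Rightarrow> real) \<Rightarrow> real" where
  "sqnorm5 u = (u 0)\<^sup>2 + (u 1)\<^sup>2 + (u 2)\<^sup>2 + (u 3)\<^sup>2 + (u 4)\<^sup>2"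

lemma gamma_square: "gamma u * gamma u = complex_of_real (sqnorm5 u) \<cdot>\<^sub>m 1\<^sub>m 4"
proof (rule eq_matI)
  fix i j assume "i < dim_row (complex_of_real (sqnorm5 u) \<cdot>\<^sub>m 1\<^sub>m 4)"
    "j < dim_col (complex_of_real (sqnorm5 u) \<cdot>\<^sub>m 1\<^sub>m 4)"
  then have i: "i < 4" and j: "j < 4" by auto
  from less_4_cases[OF i] less_4_cases[OF j]
  show "(gamma u * gamma u) $$ (i, j) = (complex_of_real (sqnorm5 u) \<cdot>\<^sub>m 1\<^sub>m 4) $$ (i, j)"
    by (elim disjE) (simp_all add: gamma_def gamma_entries_def scalar_prod_def sum_lessThan_4
        atLeast0LessThan sqnorm5_def complex_eq_iff power2_eq_square algebra_simps)
qed (auto simp: gamma_def)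

lemma gammaT_square: "gammaT u * gammaT u = complex_of_real (sqnorm5 u) \<cdot>\<^sub>m 1\<^sub>m 4"
proof (rule eq_matI)
  fix i j assume "i < dim_row (complex_of_real (sqnorm5 u) \<cdot>\<^sub>m 1\<^sub>m 4)"
    "j < dim_col (complex_of_real (sqnorm5 u) \<cdot>\<^sub>m 1\<^sub>m 4)"
  then have i: "i < 4" and j: "j < 4" by auto
  from less_4_cases[OF i] less_4_cases[OF j]
  show "(gammaT u * gammaT u) $$ (i, j) = (complex_of_real (sqnorm5 u) \<cdot>\<^sub>m 1\<^sub>m 4) $$ (i, j)"
    by (elim disjE) (simp_all add: gammaT_def gamma_entries_def scalar_prod_def sum_lessThan_4
        atLeast0LessThan sqnorm5_def complex_eq_iff power2_eq_square algebra_simps)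
qed (auto simp: gammaT_def)

lemma gamma_adj: "adj (gamma u) = gamma u"
proof (rule eq_matI)
  fix i j assume "i < dim_row (gamma u)" "j < dim_col (gamma u)"
  then have i: "i < 4" and j: "j < 4" by (auto simp: gamma_def)
  from less_4_cases[OF i] less_4_cases[OF j] show "adj (gamma u) $$ (i, j) = gamma u $$ (i, j)"
    by (elim disjE) (simp_all add: adj_def gamma_def gamma_entries_def complex_eq_iff)
qed (auto simp: adj_def gamma_def)

lemma gammaT_adj: "adj (gammaT u) = gammaT u"
proof (rule eq_matI)
  fix i j assume "i < dim_row (gammaT u)" "j < dim_col (gammaT u)"
  then have i: "i < 4" and j: "j < 4" by (auto simp: gammaT_def)
  from less_4_cases[OF i] less_4_cases[OF j] show "adj (gammaT u) $$ (i, j) = gammaT u $$ (i, j)"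
    by (elim disjE) (simp_all add: adj_def gammaT_def gamma_entries_def complex_eq_iff)
qed (auto simp: adj_def gammaT_def)

lemma smult_one_mat: "(1 :: 'a :: semiring_1) \<cdot>\<^sub>m A = A"
  by (rule eq_matI) auto

lemma gamma_observable: "sqnorm5 u = 1 \<Longrightarrow> observable 4 (gamma u)"
  unfolding observable_def using gamma_square[of u] gamma_adj[of u] by (simp add: gamma_def smult_one_mat)

lemma gammaT_observable: "sqnorm5 u = 1 \<Longrightarrow> observable 4 (gammaT u)"
  unfolding observable_def using gammaT_square[of u] gammaT_adj[of u] by (simp add: gammaT_def smult_one_mat)

lemma gamma_trace: "(\<Sum>a<4. \<Sum>c<4. gammaT u $$ (a, c) * gamma w $$ (a, c))
    = 4 * complex_of_real (u 0 * w 0 + u 1 * w 1 + u 2 * w 2 + u 3 * w 3 + u 4 * w 4)"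
  by (simp add: sum_lessThan_4 gammaT_def gamma_def gamma_entries_def complex_eq_iff algebra_simps)

lemma gamma_diff:
  "i < 4 \<Longrightarrow> j < 4 \<Longrightarrow> gamma u $$ (i, j) - gamma w $$ (i, j) = gamma (\<lambda>m. u m - w m) $$ (i, j)"
  by (drule less_4_cases, drule less_4_cases, elim disjE) (simp_all add: gamma_def gamma_entries_def complex_eq_iff)

text \<open>Six unit vectors in \<open>\<real>\<^sup>5\<close> forming a regular simplex (pairwise inner product \<open>-1/5\<close>, so
  pairwise squared distance \<open>12/5\<close>).\<close>
definition simplex :: "nat \<Rightarrow> nat \<Rightarrow> real" where
  "simplex k m = (if k = 6 then 1 else (if m + 1 = k then sqrt 6 else 0) - (1 + sqrt 6) / 5) / sqrt 5"

lemma Z6_bob_cases: "k \<in> Z6_bob \<Longrightarrow> k = 1 \<or> k = 2 \<or> k = 3 \<or> k = 4 \<or> k = 5 \<or> k = 6"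
  unfolding Z6_bob_def by auto

lemma simplex_unit: "k \<in> Z6_bob \<Longrightarrow> sqnorm5 (simplex k) = 1"
  by (drule Z6_bob_cases, elim disjE)
     (simp_all add: sqnorm5_def simplex_def power_divide power2_eq_square field_simps)

lemma simplex_dist:
  "i \<in> Z6_bob \<Longrightarrow> j \<in> Z6_bob \<Longrightarrow> i \<noteq> j \<Longrightarrow> sqnorm5 (\<lambda>m. simplex i m - simplex j m) = 12 / 5"
  by (drule Z6_bob_cases, drule Z6_bob_cases, elim disjE)
     (simp_all add: sqnorm5_def simplex_def power_divide power2_eq_square field_simps)

definition simplex_edge :: real where
  "simplex_edge = sqrt (12 / 5)"

lemma simplex_edge_pos: "simplex_edge > 0"
  unfolding simplex_edge_def by simp

definition bob_opt :: "nat \<Rightarrow> complex mat" where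
  "bob_opt k = gamma (simplex k)"

definition alice_opt :: "nat \<times> nat \<Rightarrow> complex mat" where
  "alice_opt x = gammaT (\<lambda>m. (simplex (fst x) m - simplex (snd x) m) / simplex_edge)"

lemma Z6_alice_ends: "x \<in> Z6_alice \<Longrightarrow> fst x \<in> Z6_bob \<and> snd x \<in> Z6_bob \<and> fst x \<noteq> snd x"
  by (auto simp: Z6_alice_pairs pairs_def)

lemma bob_opt_observable: "k \<in> Z6_bob \<Longrightarrow> observable 4 (bob_opt k)"
  unfolding bob_opt_def by (intro gamma_observable simplex_unit)

lemma alice_opt_observable: "x \<in> Z6_alice \<Longrightarrow> observable 4 (alice_opt x)"
  unfolding alice_opt_def using Z6_alice_ends[of x] simplex_dist[of "fst x" "snd x"]
  by (intro gammaT_observable) (simp add: sqnorm5_def simplex_edge_def power_divide add_divide_distrib[symmetric])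

text \<open>Each Alice setting contributes \<open>(1/4) tr (\<Gamma>(u)\<Gamma>(v\<^sub>i - v\<^sub>j)) = |v\<^sub>i - v\<^sub>j| = \<surd>(12/5)\<close>.\<close>
lemma opt_pair_value:
  assumes x: "x \<in> Z6_alice"
  shows "expval psi_max4 (kron (alice_opt x) (bob_opt (fst x)))
      - expval psi_max4 (kron (alice_opt x) (bob_opt (snd x))) = complex_of_real simplex_edge"
proof -
  let ?d = "\<lambda>m. simplex (fst x) m - simplex (snd x) m"
  have car: "alice_opt x \<in> carrier_mat 4 4" "bob_opt k \<in> carrier_mat 4 4" for k
    by (auto simp: alice_opt_def bob_opt_def gammaT_def gamma_def)
  have "expval psi_max4 (kron (alice_opt x) (bob_opt (fst x)))
      - expval psi_max4 (kron (alice_opt x) (bob_opt (snd x)))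
      = 1 / 4 * ((\<Sum>a<4. \<Sum>c<4. alice_opt x $$ (a, c) * bob_opt (fst x) $$ (a, c))
          - (\<Sum>a<4. \<Sum>c<4. alice_opt x $$ (a, c) * bob_opt (snd x) $$ (a, c)))"
  proof -
    have e: "expval psi_max4 (kron (alice_opt x) (bob_opt k))
        = cnj (1 / 2) * (1 / 2) * (\<Sum>a<4. \<Sum>c<4. alice_opt x $$ (a, c) * bob_opt k $$ (a, c))" for k
      by (rule expval_maxent[OF psi_max4_carrier car(1) car(2) psi_max4_coords])
    show ?thesis unfolding e by (simp add: right_diff_distrib)
  qed
  also have "(\<Sum>a<4. \<Sum>c<4. alice_opt x $$ (a, c) * bob_opt (fst x) $$ (a, c))
      - (\<Sum>a<4. \<Sum>c<4. alice_opt x $$ (a, c) * bob_opt (snd x) $$ (a, c))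
      = (\<Sum>a<4. \<Sum>c<4. gammaT (\<lambda>m. ?d m / simplex_edge) $$ (a, c) * gamma ?d $$ (a, c))"
    unfolding sum_subtractf[symmetric]
    by (intro sum.cong refl) (simp add: alice_opt_def bob_opt_def gamma_diff[symmetric] right_diff_distrib)
  also have "\<dots> = 4 * complex_of_real (sqnorm5 ?d / simplex_edge)"
    unfolding gamma_trace sqnorm5_def by (simp add: power2_eq_square add_divide_distrib)
  also have "sqnorm5 ?d = simplex_edge * simplex_edge"
    using Z6_alice_ends[OF x] simplex_dist[of "fst x" "snd x"] by (simp add: simplex_edge_def)
  finally show ?thesis using simplex_edge_pos by simp
qed

lemma Z6_quantum_attained:
  "Re (\<Sum>x\<in>Z6_alice. \<Sum>y\<in>Z6_bob. complex_of_real (Z6_M x y) * expval psi_max4 (kron (alice_opt x) (bob_opt y)))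
    = 6 * sqrt 15"
proof -
  have "(\<Sum>x\<in>Z6_alice. \<Sum>y\<in>Z6_bob. complex_of_real (Z6_M x y) * expval psi_max4 (kron (alice_opt x) (bob_opt y)))
      = complex_of_real (15 * simplex_edge)"
    unfolding Z6_value by (simp add: opt_pair_value card_Z6_alice)
  moreover have "15 * simplex_edge = 6 * sqrt 15"
  proof -
    have "simplex_edge = 6 / 15 * sqrt 15" unfolding simplex_edge_def
      by (rule real_sqrt_unique) (auto simp: power_mult_distrib power_divide)
    then show ?thesis by simp
  qed
  ultimately show ?thesis by simp
qed

definition c1 :: "real \<times> real \<times> real \<Rightarrow> real" where "c1 v = fst v"
definition c2 :: "real \<times> real \<times> real \<Rightarrow> real" where "c2 v = fst (snd v)"
definition c3 :: "real \<times> real \<times> real \<Rightarrow> real" where "c3 v = snd (snd v)"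

definition diff3 :: "real \<times> real \<times> real \<Rightarrow> real \<times> real \<times> real \<Rightarrow> real \<times> real \<times> real" where
  "diff3 u w = (c1 u - c1 w, c2 u - c2 w, c3 u - c3 w)"

definition scale3 :: "real \<Rightarrow> real \<times> real \<times> real \<Rightarrow> real \<times> real \<times> real" where
  "scale3 r v = (r * c1 v, r * c2 v, r * c3 v)"

definition dot3 :: "real \<times> real \<times> real \<Rightarrow> real \<times> real \<times> real \<Rightarrow> real" where
  "dot3 u v = c1 u * c1 v + c2 u * c2 v + c3 u * c3 v"

definition sqnorm3 :: "real \<times> real \<times> real \<Rightarrow> real" where
  "sqnorm3 v = (c1 v)\<^sup>2 + (c2 v)\<^sup>2 + (c3 v)\<^sup>2"

lemmas triple_defs = c1_def c2_def c3_def diff3_def scale3_def dot3_def sqnorm3_def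

lemma on_S2_sqnorm3: "on_S2 v \<longleftrightarrow> sqnorm3 v = 1"
  unfolding on_S2_def sqnorm3_def c1_def c2_def c3_def by (cases v) auto

lemma sqnorm3_diff3: "sqnorm3 (diff3 u w) = sqnorm3 u + sqnorm3 w - 2 * dot3 u w"
  unfolding triple_defs by (simp add: power2_eq_square algebra_simps)

lemma dot3_diff3: "dot3 u w1 - dot3 u w2 = dot3 u (diff3 w1 w2)"
  unfolding triple_defs by (simp add: algebra_simps)

lemma dot3_scale3: "dot3 (scale3 r d) d = r * sqnorm3 d"
  unfolding triple_defs by (simp add: power2_eq_square algebra_simps)

lemma sqnorm3_scale3: "sqnorm3 (scale3 r d) = r\<^sup>2 * sqnorm3 d"
  unfolding triple_defs by (simp add: power_mult_distrib algebra_simps)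

lemma dot3_unit_bounds:
  assumes "sqnorm3 u = 1" "sqnorm3 w = 1"
  shows "-1 \<le> dot3 u w" "dot3 u w \<le> 1"
proof -
  have "0 \<le> (c1 u + c1 w)\<^sup>2 + (c2 u + c2 w)\<^sup>2 + (c3 u + c3 w)\<^sup>2" by simp
  also have "\<dots> = sqnorm3 u + sqnorm3 w + 2 * dot3 u w"
    unfolding triple_defs by (simp add: power2_eq_square algebra_simps)
  finally show "-1 \<le> dot3 u w" using assms by simp
  have "0 \<le> sqnorm3 (diff3 u w)" unfolding sqnorm3_def by simp
  then show "dot3 u w \<le> 1" using assms sqnorm3_diff3[of u w] by simp
qed

lemma dot_sigma_carrier: "dot_sigma v \<in> carrier_mat 2 2" "dot_sigmaT v \<in> carrier_mat 2 2"
  by (cases v, simp add: dot_sigma_def dot_sigmaT_def sigma_x_def sigma_y_def sigma_z_def)+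

lemma dot_sigma_entries:
  "dot_sigma v $$ (0, 0) = of_real (c3 v)"
  "dot_sigma v $$ (0, 1) = of_real (c1 v) - \<i> * of_real (c2 v)"
  "dot_sigma v $$ (1, 0) = of_real (c1 v) + \<i> * of_real (c2 v)"
  "dot_sigma v $$ (1, 1) = - of_real (c3 v)"
  "dot_sigmaT v $$ (0, 0) = of_real (c3 v)"
  "dot_sigmaT v $$ (0, 1) = of_real (c1 v) + \<i> * of_real (c2 v)"
  "dot_sigmaT v $$ (1, 0) = of_real (c1 v) - \<i> * of_real (c2 v)"
  "dot_sigmaT v $$ (1, 1) = - of_real (c3 v)"
  by (cases v, simp add: dot_sigma_def dot_sigmaT_def sigma_x_def sigma_y_def sigma_z_def c1_def c2_def c3_def)+

lemmas dot_sigma_entries' = dot_sigma_entries dot_sigma_entries[unfolded One_nat_def]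

lemma sum_lessThan_2: "(\<Sum>k<2::nat. f k) = f 0 + f 1"
  by (simp add: eval_nat_numeral)

lemma less_2_cases: "(i::nat) < 2 \<Longrightarrow> i = 0 \<or> i = 1"
  by arith

lemma dot_sigma_observable:
  assumes "on_S2 a"
  shows "observable 2 (dot_sigma a)"
proof -
  have unit: "(c1 a)\<^sup>2 + (c2 a)\<^sup>2 + (c3 a)\<^sup>2 = 1"
    using assms unfolding on_S2_sqnorm3 sqnorm3_def .
  have "dot_sigma a * dot_sigma a = 1\<^sub>m 2"
  proof (rule eq_matI)
    fix i j assume "i < dim_row (1\<^sub>m 2 :: complex mat)" "j < dim_col (1\<^sub>m 2 :: complex mat)"
    then have i: "i < 2" and j: "j < 2" by auto
    from less_2_cases[OF i] less_2_cases[OF j] unit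
    show "(dot_sigma a * dot_sigma a) $$ (i, j) = 1\<^sub>m 2 $$ (i, j)"
      using dot_sigma_carrier(1)[of a]
      by (elim disjE) (auto simp: scalar_prod_def sum_lessThan_2 atLeast0LessThan dot_sigma_entries'
          complex_eq_iff power2_eq_square algebra_simps)
  qed (use dot_sigma_carrier(1)[of a] in auto)
  moreover have "adj (dot_sigma a) = dot_sigma a"
  proof (rule eq_matI)
    fix i j assume "i < dim_row (dot_sigma a)" "j < dim_col (dot_sigma a)"
    then have i: "i < 2" and j: "j < 2" using dot_sigma_carrier(1)[of a] by auto
    from less_2_cases[OF i] less_2_cases[OF j]
    show "adj (dot_sigma a) $$ (i, j) = dot_sigma a $$ (i, j)"
      using dot_sigma_carrier(1)[of a]
      by (elim disjE) (auto simp: adj_def dot_sigma_entries' complex_eq_iff)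
  qed (use dot_sigma_carrier(1)[of a] in \<open>auto simp: adj_def\<close>)
  ultimately show ?thesis using dot_sigma_carrier(1) unfolding observable_def by blast
qed

lemma dot_sigmaT_columns:
  "d < 2 \<Longrightarrow> d' < 2 \<Longrightarrow> (\<Sum>b<2. cnj (dot_sigmaT v $$ (b, d)) * dot_sigmaT v $$ (b, d'))
    = (if d = d' then complex_of_real (sqnorm3 v) else 0)"
  by (drule less_2_cases, drule less_2_cases, elim disjE)
     (simp_all add: dot_sigma_entries' sum_lessThan_2 sqnorm3_def complex_eq_iff power2_eq_square algebra_simps)

lemma act_right_dot_sigmaT_diff:
  "b < 2 \<Longrightarrow> act_right 2 (dot_sigmaT u) \<psi> a b - act_right 2 (dot_sigmaT w) \<psi> a b
    = act_right 2 (dot_sigmaT (diff3 u w)) \<psi> a b"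
proof -
  assume "b < 2"
  then have "dot_sigmaT u $$ (b, d) - dot_sigmaT w $$ (b, d) = dot_sigmaT (diff3 u w) $$ (b, d)"
    if "d < 2" for d
    using that by (auto dest!: less_2_cases simp: dot_sigma_entries' triple_defs complex_eq_iff)
  then show ?thesis
    unfolding act_right_def sum_subtractf[symmetric] by (intro sum.cong refl) (simp add: left_diff_distrib[symmetric])
qed

lemma qubit_setting_le:
  assumes psi: "unit_vec_c 4 \<psi>" and a: "on_S2 a"
    and l: "l > 0" and dist: "sqnorm3 (diff3 b1 b2) \<le> l\<^sup>2"
  shows "Re (expval \<psi> (kron (dot_sigma a) (dot_sigmaT b1)) - expval \<psi> (kron (dot_sigma a) (dot_sigmaT b2))) \<le> l"
proof -
  have psi': "unit_vec_c (2 * 2) \<psi>" using psi by simp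
  have "sqnorm 2 (\<lambda>a' b'. act_right 2 (dot_sigmaT b1) \<psi> a' b' - act_right 2 (dot_sigmaT b2) \<psi> a' b')
      = sqnorm 2 (act_right 2 (dot_sigmaT (diff3 b1 b2)) \<psi>)"
    by (rule sqnorm_cong) (simp add: act_right_dot_sigmaT_diff)
  also have "\<dots> = sqnorm3 (diff3 b1 b2)"
    by (rule sqnorm_act_right[OF psi' dot_sigmaT_columns])
  finally have "Re (expval \<psi> (kron (dot_sigma a) (dot_sigmaT b1)) - expval \<psi> (kron (dot_sigma a) (dot_sigmaT b2)))
      \<le> (l + sqnorm3 (diff3 b1 b2) / l) / 2"
    using expval_diff_le[OF psi' dot_sigma_observable[OF a] dot_sigma_carrier(2)[of b1]
        dot_sigma_carrier(2)[of b2] l]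
    by (simp only:)
  also have "\<dots> \<le> l"
    using l dist by (simp add: divide_le_eq power2_eq_square)
  finally show ?thesis .
qed

text \<open>A quadratic majorant of \<open>|b\<^sub>1 - b\<^sub>2| = \<surd>(2 - 2t)\<close> on \<open>t \<in> [-1, 1]\<close>, exact at the
  octahedral angles \<open>t = -1\<close> and \<open>t = 0\<close>.\<close>
definition majorant :: "real \<Rightarrow> real" where
  "majorant t = sqrt 2 - (sqrt 2 / 2) * t + (2 - 3 * sqrt 2 / 2) * t\<^sup>2"

lemma sqrt2_bounds: "1.4 < sqrt (2::real)" "sqrt (2::real) < 1.5"
  by (rule real_less_rsqrt, simp add: power_divide) (rule real_less_lsqrt, simp_all add: power_divide)

text \<open>The majorant is positive on \<open>[-1, 1]\<close> and dominates \<open>\<surd>(2 - 2t)\<close> there: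
  \<open>g(t)\<^sup>2 - (2 - 2t) = t\<^sup>2 (t + 1) (c\<^sup>2 (t - 1) + 3 - 2\<surd>2)\<close> with \<open>c = 2 - 3\<surd>2/2\<close>.\<close>
lemma majorant_pos:
  assumes "-1 \<le> t" "t \<le> 1"
  shows "majorant t > 0"
proof -
  have "t\<^sup>2 \<le> 1" using assms by (simp add: abs_square_le_1)
  moreover have "2 - 3 * sqrt 2 / 2 < (0::real)" using sqrt2_bounds by simp
  ultimately have "(2 - 3 * sqrt 2 / 2) * t\<^sup>2 \<ge> (2 - 3 * sqrt 2 / 2)"
    by (simp add: mult_le_cancel_left2)
  moreover have "(sqrt 2 / 2) * t \<le> sqrt 2 / 2" using assms by simp
  ultimately show ?thesis unfolding majorant_def using sqrt2_bounds by linarith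
qed

lemma majorant_sq:
  assumes "-1 \<le> t" "t \<le> 1"
  shows "2 - 2 * t \<le> (majorant t)\<^sup>2"
proof -
  define s where "s = sqrt (2::real)"
  define c where "c = 2 - 3 * s / 2"
  have ss: "s * s = 2" unfolding s_def by simp
  have "(majorant t)\<^sup>2 - (2 - 2 * t) - t\<^sup>2 * ((t + 1) * (c\<^sup>2 * (t - 1) + 3 - 2 * s))
      = (s * s - 2) * (1 - t - t\<^sup>2 / 2 + 3 / 2 * t ^ 3)"
    unfolding majorant_def s_def[symmetric] c_def by (simp add: power2_eq_square power3_eq_cube field_simps)
  then have factor: "(majorant t)\<^sup>2 - (2 - 2 * t) = t\<^sup>2 * ((t + 1) * (c\<^sup>2 * (t - 1) + 3 - 2 * s))"
    using ss by simp
  have "c\<^sup>2 = 17 / 2 - 6 * s + 9 / 4 * (s * s - 2)"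
    unfolding c_def by (simp add: power2_eq_square field_simps)
  then have c2: "c\<^sup>2 = 17 / 2 - 6 * s" using ss by simp
  have "c\<^sup>2 * (t - 1) \<ge> c\<^sup>2 * (-2)" using assms by (intro mult_left_mono) auto
  then have "c\<^sup>2 * (t - 1) + 3 - 2 * s \<ge> 0" using c2 sqrt2_bounds unfolding s_def[symmetric] by linarith
  then have "0 \<le> t\<^sup>2 * ((t + 1) * (c\<^sup>2 * (t - 1) + 3 - 2 * s))" using assms by simp
  then show ?thesis using factor by linarith
qed

definition coord3 :: "real \<times> real \<times> real \<Rightarrow> nat \<Rightarrow> real" where
  "coord3 v a = (if a = 0 then c1 v else if a = 1 then c2 v else c3 v)"

lemma sum_lessThan_3: "(\<Sum>a<3::nat. f a) = f 0 + f 1 + f 2"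
  by (simp add: eval_nat_numeral)

lemma dot3_coord3: "dot3 u w = (\<Sum>a<3. coord3 u a * coord3 w a)"
  unfolding dot3_def coord3_def by (simp add: sum_lessThan_3)

lemma sum_swap_outer2:
  "(\<Sum>a\<in>A. \<Sum>c\<in>C. \<Sum>i\<in>I. \<Sum>j\<in>J. f a c i j) = (\<Sum>i\<in>I. \<Sum>j\<in>J. \<Sum>a\<in>A. \<Sum>c\<in>C. f a c i j)"
proof -
  have "(\<Sum>a\<in>A. \<Sum>c\<in>C. \<Sum>i\<in>I. \<Sum>j\<in>J. f a c i j) = (\<Sum>a\<in>A. \<Sum>i\<in>I. \<Sum>c\<in>C. \<Sum>j\<in>J. f a c i j)"
    by (rule sum.cong[OF refl], rule sum.swap)
  also have "\<dots> = (\<Sum>a\<in>A. \<Sum>i\<in>I. \<Sum>j\<in>J. \<Sum>c\<in>C. f a c i j)"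
    by (rule sum.cong[OF refl], rule sum.cong[OF refl], rule sum.swap)
  also have "\<dots> = (\<Sum>i\<in>I. \<Sum>a\<in>A. \<Sum>j\<in>J. \<Sum>c\<in>C. f a c i j)"
    by (rule sum.swap)
  also have "\<dots> = (\<Sum>i\<in>I. \<Sum>j\<in>J. \<Sum>a\<in>A. \<Sum>c\<in>C. f a c i j)"
    by (rule sum.cong[OF refl], rule sum.swap)
  finally show ?thesis .
qed

text \<open>Gram-matrix constraints for unit vectors \<open>p\<^sub>k \<in> S\<^sup>2\<close>, \<open>k \<in> K\<close>, \<open>|K| = n\<close>:
  \<open>\<Sum>\<^sub>i\<^sub><\<^sub>j p\<^sub>i\<cdot>p\<^sub>j \<ge> -n/2\<close> (from \<open>|\<Sum> p\<^sub>k|\<^sup>2 \<ge> 0\<close>) and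
  \<open>\<Sum>\<^sub>i\<^sub><\<^sub>j (p\<^sub>i\<cdot>p\<^sub>j)\<^sup>2 \<ge> (n\<^sup>2/3 - n)/2\<close> (from \<open>\<parallel>\<Sum> p\<^sub>k p\<^sub>k\<^sup>T\<parallel>\<^sub>F\<^sup>2 \<ge> (tr)\<^sup>2/3\<close>).\<close>
lemma gram_pairs_sum_ge:
  assumes K: "finite K" and unit: "\<And>k. k \<in> K \<Longrightarrow> sqnorm3 (p k) = 1"
  shows "2 * (\<Sum>q\<in>pairs K. dot3 (p (fst q)) (p (snd q))) \<ge> - card K"
proof -
  have diag: "dot3 (p k) (p k) = 1" if "k \<in> K" for k
    using unit[OF that] unfolding dot3_def sqnorm3_def by (simp add: power2_eq_square)
  have "0 \<le> (\<Sum>a<3. (\<Sum>i\<in>K. coord3 (p i) a)\<^sup>2)" by (intro sum_nonneg) simp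
  also have "\<dots> = (\<Sum>i\<in>K. \<Sum>j\<in>K. dot3 (p i) (p j))"
    unfolding dot3_coord3 power2_eq_square sum_product
    by (subst sum_reverse3) (rule sum.cong[OF refl], rule sum.swap)
  also have "\<dots> = card K + 2 * (\<Sum>q\<in>pairs K. dot3 (p (fst q)) (p (snd q)))"
    using diag by (subst sum_symmetric_pairs[OF K]) (auto simp: dot3_def)
  finally show ?thesis by simp
qed

lemma gram_pairs_sq_sum_ge:
  assumes K: "finite K" and unit: "\<And>k. k \<in> K \<Longrightarrow> sqnorm3 (p k) = 1"
  shows "2 * (\<Sum>q\<in>pairs K. (dot3 (p (fst q)) (p (snd q)))\<^sup>2) \<ge> (real (card K))\<^sup>2 / 3 - card K"
proof -
  define M where "M a c = (\<Sum>i\<in>K. coord3 (p i) a * coord3 (p i) c)" for a c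
  have diag: "(dot3 (p k) (p k))\<^sup>2 = 1" if "k \<in> K" for k
    using unit[OF that] unfolding dot3_def sqnorm3_def by (simp add: power2_eq_square)
  have trace: "M 0 0 + M 1 1 + M 2 2 = card K"
  proof -
    have "M 0 0 + M 1 1 + M 2 2 = (\<Sum>i\<in>K. sqnorm3 (p i))"
      unfolding M_def sqnorm3_def coord3_def by (simp add: sum.distrib power2_eq_square)
    also have "\<dots> = card K" using unit by simp
    finally show ?thesis .
  qed
  have "(real (card K))\<^sup>2 / 3 \<le> (M 0 0)\<^sup>2 + (M 1 1)\<^sup>2 + (M 2 2)\<^sup>2"
  proof -
    have "3 * ((M 0 0)\<^sup>2 + (M 1 1)\<^sup>2 + (M 2 2)\<^sup>2) - (M 0 0 + M 1 1 + M 2 2)\<^sup>2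
        = (M 0 0 - M 1 1)\<^sup>2 + (M 1 1 - M 2 2)\<^sup>2 + (M 0 0 - M 2 2)\<^sup>2"
      by (simp add: power2_eq_square algebra_simps)
    moreover have "0 \<le> (M 0 0 - M 1 1)\<^sup>2 + (M 1 1 - M 2 2)\<^sup>2 + (M 0 0 - M 2 2)\<^sup>2" by simp
    ultimately show ?thesis unfolding trace[symmetric] pos_divide_le_eq[of 3, OF zero_less_numeral] by linarith
  qed
  also have "\<dots> \<le> (\<Sum>a<3. \<Sum>c<3. (M a c)\<^sup>2)"
    by (simp add: sum_lessThan_3)
  also have "\<dots> = (\<Sum>i\<in>K. \<Sum>j\<in>K. (dot3 (p i) (p j))\<^sup>2)"
  proof -
    have "(\<Sum>a<3. \<Sum>c<3. (M a c)\<^sup>2) = (\<Sum>a<3. \<Sum>c<3. \<Sum>i\<in>K. \<Sum>j\<in>K.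
        (coord3 (p i) a * coord3 (p j) a) * (coord3 (p i) c * coord3 (p j) c))"
      unfolding M_def power2_eq_square sum_product by (intro sum.cong refl) (simp add: mult_ac)
    also have "\<dots> = (\<Sum>i\<in>K. \<Sum>j\<in>K. \<Sum>a<3. \<Sum>c<3.
        (coord3 (p i) a * coord3 (p j) a) * (coord3 (p i) c * coord3 (p j) c))"
      by (rule sum_swap_outer2)
    also have "\<dots> = (\<Sum>i\<in>K. \<Sum>j\<in>K. (dot3 (p i) (p j))\<^sup>2)"
      unfolding dot3_coord3 power2_eq_square sum_product ..
    finally show ?thesis .
  qed
  also have "\<dots> = card K + 2 * (\<Sum>q\<in>pairs K. (dot3 (p (fst q)) (p (snd q)))\<^sup>2)"
    using diag by (subst sum_symmetric_pairs[OF K]) (auto simp: dot3_def algebra_simps)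
  finally show ?thesis by simp
qed

text \<open>Summing the majorant over the 15 pairs of six unit vectors and using the Gram constraints
  \<open>\<Sum> t\<^sub>i\<^sub>j \<ge> -3\<close>, \<open>\<Sum> t\<^sub>i\<^sub>j\<^sup>2 \<ge> 3\<close> (the coefficient of \<open>t\<^sup>2\<close> is negative).\<close>
lemma majorant_sum_le:
  assumes unit: "\<And>k. k \<in> Z6_bob \<Longrightarrow> sqnorm3 (b k) = 1"
  shows "(\<Sum>x\<in>Z6_alice. majorant (dot3 (b (fst x)) (b (snd x)))) \<le> 6 * (1 + 2 * sqrt 2)"
proof -
  define P1 where "P1 = (\<Sum>x\<in>Z6_alice. dot3 (b (fst x)) (b (snd x)))"
  define P2 where "P2 = (\<Sum>x\<in>Z6_alice. (dot3 (b (fst x)) (b (snd x)))\<^sup>2)"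
  have P1: "P1 \<ge> -3"
    using gram_pairs_sum_ge[OF finite_Z6_bob unit] unfolding P1_def Z6_alice_pairs card_Z6_bob by simp
  have P2: "P2 \<ge> 3"
    using gram_pairs_sq_sum_ge[OF finite_Z6_bob unit] unfolding P2_def Z6_alice_pairs card_Z6_bob by simp
  have "(\<Sum>x\<in>Z6_alice. majorant (dot3 (b (fst x)) (b (snd x))))
      = 15 * sqrt 2 - (sqrt 2 / 2) * P1 + (2 - 3 * sqrt 2 / 2) * P2"
    unfolding majorant_def P1_def P2_def
    by (simp add: sum.distrib sum_subtractf sum_distrib_left card_Z6_alice)
  also have "\<dots> \<le> 15 * sqrt 2 - (sqrt 2 / 2) * (-3) + (2 - 3 * sqrt 2 / 2) * 3"
  proof -
    have "(sqrt 2 / 2) * (-3) \<le> (sqrt 2 / 2) * P1" using P1 by (intro mult_left_mono) auto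
    moreover have "(2 - 3 * sqrt 2 / 2) * P2 \<le> (2 - 3 * sqrt 2 / 2) * 3"
      using P2 sqrt2_bounds by (intro mult_left_mono_neg) auto
    ultimately show ?thesis by linarith
  qed
  also have "\<dots> = 6 * (1 + 2 * sqrt 2)" by simp
  finally show ?thesis .
qed

text \<open>Qubit bound: each Alice term is at most \<open>g(b\<^sub>i \<cdot> b\<^sub>j)\<close>.\<close>
lemma Z6_qubit_bound:
  assumes psi: "unit_vec_c 4 \<psi>" and a: "\<forall>x\<in>Z6_alice. on_S2 (a x)" and b: "\<forall>y\<in>Z6_bob. on_S2 (b y)"
  shows "Re (\<Sum>x\<in>Z6_alice. \<Sum>y\<in>Z6_bob. complex_of_real (Z6_M x y) *
        expval \<psi> (kron (dot_sigma (a x)) (dot_sigmaT (b y)))) \<le> 6 * (1 + 2 * sqrt 2)"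
proof -
  have unit: "sqnorm3 (b k) = 1" if "k \<in> Z6_bob" for k
    using b that by (simp add: on_S2_sqnorm3)
  have "Re (\<Sum>x\<in>Z6_alice. \<Sum>y\<in>Z6_bob. complex_of_real (Z6_M x y) *
        expval \<psi> (kron (dot_sigma (a x)) (dot_sigmaT (b y))))
      = (\<Sum>x\<in>Z6_alice. Re (expval \<psi> (kron (dot_sigma (a x)) (dot_sigmaT (b (fst x))))
          - expval \<psi> (kron (dot_sigma (a x)) (dot_sigmaT (b (snd x))))))"
    unfolding Z6_value by (simp only: Re_sum)
  also have "\<dots> \<le> (\<Sum>x\<in>Z6_alice. majorant (dot3 (b (fst x)) (b (snd x))))"
  proof (rule sum_mono)
    fix x assume x: "x \<in> Z6_alice"
    let ?t = "dot3 (b (fst x)) (b (snd x))"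
    have ends: "sqnorm3 (b (fst x)) = 1" "sqnorm3 (b (snd x)) = 1"
      using unit Z6_alice_ends[OF x] by auto
    note t = dot3_unit_bounds[OF ends]
    show "Re (expval \<psi> (kron (dot_sigma (a x)) (dot_sigmaT (b (fst x))))
        - expval \<psi> (kron (dot_sigma (a x)) (dot_sigmaT (b (snd x))))) \<le> majorant ?t"
      using majorant_sq[OF t] ends a x
      by (intro qubit_setting_le[OF psi _ majorant_pos[OF t]]) (auto simp: sqnorm3_diff3)
  qed
  also have "\<dots> \<le> 6 * (1 + 2 * sqrt 2)"
    using majorant_sum_le unit by blast
  finally show ?thesis .
qed

text \<open>The qubit optimum: Bob measures along the six vertices \<open>\<plusminus>e\<^sub>1, \<plusminus>e\<^sub>2, \<plusminus>e\<^sub>3\<close> of an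
  octahedron, Alice along the normalised differences, on the maximally entangled
  two-qubit state; pairs of antipodal vertices contribute \<open>2\<close>, the other twelve pairs \<open>\<surd>2\<close>.\<close>
definition psi_max2 :: "complex vec" where
  "psi_max2 = vec 4 (\<lambda>n. if n div 2 = n mod 2 then complex_of_real (1 / sqrt 2) else 0)"

definition octahedron :: "nat \<Rightarrow> real \<times> real \<times> real" where
  "octahedron k = (if k = 1 then (1, 0, 0) else if k = 2 then (-1, 0, 0) else if k = 3 then (0, 1, 0)
     else if k = 4 then (0, -1, 0) else if k = 5 then (0, 0, 1) else (0, 0, -1))"

definition alice_oct :: "nat \<times> nat \<Rightarrow> real \<times> real \<times> real" where
  "alice_oct x = scale3 (1 / sqrt (sqnorm3 (diff3 (octahedron (fst x)) (octahedron (snd x)))))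
     (diff3 (octahedron (fst x)) (octahedron (snd x)))"

lemma psi_max2_carrier: "psi_max2 \<in> carrier_vec (2 * 2)"
  unfolding psi_max2_def by simp

lemma psi_max2_coords:
  "a < 2 \<Longrightarrow> b < 2 \<Longrightarrow> psi_max2 $ (a * 2 + b) = (if a = b then complex_of_real (1 / sqrt 2) else 0)"
  unfolding psi_max2_def by simp

lemma half_amplitude: "cnj (complex_of_real (1 / sqrt 2)) * complex_of_real (1 / sqrt 2) = 1 / 2"
proof -
  have "(1 / sqrt 2) * (1 / sqrt 2) = (1 / 2 :: real)" by simp
  then show ?thesis by (simp only: complex_cnj_complex_of_real of_real_mult[symmetric]) simp
qed

lemma psi_max2_unit: "unit_vec_c 4 psi_max2"
proof -
  have "map_vec cnj psi_max2 \<bullet> psi_max2 = 1"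
    unfolding inner_tensor_coords[OF psi_max2_carrier]
    using half_amplitude by (simp add: sum_lessThan_2 psi_max2_coords)
  then show ?thesis using psi_max2_carrier unfolding unit_vec_c_def by simp
qed

lemma expval_psi_max2_pauli:
  "expval psi_max2 (kron (dot_sigma u) (dot_sigmaT w)) = complex_of_real (dot3 u w)"
proof -
  have trace: "(\<Sum>i<2. \<Sum>j<2. dot_sigma u $$ (i, j) * dot_sigmaT w $$ (i, j)) = 2 * complex_of_real (dot3 u w)"
    by (simp add: sum_lessThan_2 dot_sigma_entries' dot3_def complex_eq_iff algebra_simps)
  have "expval psi_max2 (kron (dot_sigma u) (dot_sigmaT w))
      = cnj (complex_of_real (1 / sqrt 2)) * complex_of_real (1 / sqrt 2)
        * (\<Sum>i<2. \<Sum>j<2. dot_sigma u $$ (i, j) * dot_sigmaT w $$ (i, j))"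
    by (rule expval_maxent[OF psi_max2_carrier dot_sigma_carrier psi_max2_coords])
  then show ?thesis unfolding half_amplitude trace by simp
qed

lemma octahedron_unit: "on_S2 (octahedron k)"
  unfolding on_S2_def octahedron_def by auto

lemma alice_oct_value:
  assumes x: "x \<in> Z6_alice"
  shows "on_S2 (alice_oct x)"
    and "dot3 (alice_oct x) (octahedron (fst x)) - dot3 (alice_oct x) (octahedron (snd x))
      = sqrt (sqnorm3 (diff3 (octahedron (fst x)) (octahedron (snd x))))"
proof -
  let ?n = "sqnorm3 (diff3 (octahedron (fst x)) (octahedron (snd x)))"
  have n: "?n > 0"
    using x unfolding Z6_alice_eq by (auto simp: triple_defs octahedron_def)
  then have "(1 / sqrt ?n)\<^sup>2 * ?n = 1" by (simp add: power_divide)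
  then show "on_S2 (alice_oct x)" unfolding on_S2_sqnorm3 alice_oct_def sqnorm3_scale3 .
  have "dot3 (alice_oct x) (octahedron (fst x)) - dot3 (alice_oct x) (octahedron (snd x)) = (1 / sqrt ?n) * ?n"
    unfolding dot3_diff3 alice_oct_def dot3_scale3 ..
  also have "\<dots> = sqrt ?n"
    using n by (simp add: field_simps real_sqrt_mult[symmetric] del: real_sqrt_mult)
  finally show "dot3 (alice_oct x) (octahedron (fst x)) - dot3 (alice_oct x) (octahedron (snd x)) = sqrt ?n" .
qed

lemma octahedron_edges:
  "(\<Sum>x\<in>Z6_alice. sqrt (sqnorm3 (diff3 (octahedron (fst x)) (octahedron (snd x))))) = 6 * (1 + 2 * sqrt 2)"
proof -
  have "sqrt 4 = (2::real)" by (rule real_sqrt_unique) simp_all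
  then show ?thesis unfolding Z6_alice_eq by (simp add: triple_defs octahedron_def)
qed

lemma Z6_qubit_attained: "6 * (1 + 2 * sqrt 2) \<in> qubit_values Z6_alice Z6_bob Z6_M"
proof -
  have "(\<Sum>x\<in>Z6_alice. \<Sum>y\<in>Z6_bob. complex_of_real (Z6_M x y) *
          expval psi_max2 (kron (dot_sigma (alice_oct x)) (dot_sigmaT (octahedron y))))
      = (\<Sum>x\<in>Z6_alice. complex_of_real (sqrt (sqnorm3 (diff3 (octahedron (fst x)) (octahedron (snd x))))))"
    unfolding Z6_value expval_psi_max2_pauli
    by (intro sum.cong refl) (simp add: alice_oct_value(2) flip: of_real_diff)
  also have "\<dots> = complex_of_real (6 * (1 + 2 * sqrt 2))"
    unfolding of_real_sum[symmetric] octahedron_edges ..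
  finally show ?thesis
    unfolding qubit_values_def mem_Collect_eq
    using psi_max2_unit alice_oct_value(1) octahedron_unit
    by (intro exI[of _ psi_max2] exI[of _ alice_oct] exI[of _ octahedron]) auto
qed

lemma Z6_ratio:
  "(6 * sqrt 15) / (6 * (1 + 2 * sqrt 2)) = (sqrt 120 - sqrt 15) / 7 \<and> (sqrt 120 - sqrt 15) / 7 > (1::real)"
proof -
  define s where "s = sqrt (2::real)"
  define r where "r = sqrt (15::real)"
  have ss: "s * s = 2" unfolding s_def by simp
  have s120: "sqrt 120 = 2 * s * r"
  proof -
    have "sqrt ((4::real) * 2 * 15) = sqrt 4 * sqrt 2 * sqrt 15"
      by (simp only: real_sqrt_mult)
    then have "sqrt (120::real) = sqrt 4 * sqrt 2 * sqrt 15" by simp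
    moreover have "sqrt 4 = (2::real)" by (rule real_sqrt_unique) simp_all
    ultimately show ?thesis unfolding s_def r_def by simp
  qed
  have pos: "1 + 2 * s > 0" unfolding s_def by (simp add: add_pos_nonneg)
  have "7 * r = (2 * s * r - r) * (1 + 2 * s)" using ss by (simp add: algebra_simps)
  then have ratio: "(6 * r) / (6 * (1 + 2 * s)) = (2 * s * r - r) / 7"
    using pos by (simp add: field_simps)
  have "1.414 < s" unfolding s_def by (rule real_less_rsqrt) (simp add: power_divide)
  moreover have "3.872 < r" unfolding r_def by (rule real_less_rsqrt) (simp add: power_divide)
  ultimately have "(2 * s - 1) * r > 1.828 * 3.872"
    by (intro mult_strict_mono) auto
  then have "(2 * s * r - r) / 7 > 1" by (simp add: algebra_simps)
  then show ?thesis using ratio unfolding s120 s_def[symmetric] r_def[symmetric] by simp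
qed

theorem mainTheorem9:
  shows "classical_value Z6_alice Z6_bob Z6_M = 18
    \<and> quantum_value Z6_alice Z6_bob Z6_M = 6 * sqrt 15
    \<and> (\<exists>A B. (\<forall>x\<in>Z6_alice. observable 4 (A x)) \<and> (\<forall>y\<in>Z6_bob. observable 4 (B y)) \<and>
           Re (\<Sum>x\<in>Z6_alice. \<Sum>y\<in>Z6_bob. complex_of_real (Z6_M x y) * expval psi_max4 (kron (A x) (B y)))
             = 6 * sqrt 15)
    \<and> 6 * (1 + 2 * sqrt 2) \<in> qubit_values Z6_alice Z6_bob Z6_M
    \<and> (\<forall>v\<in>qubit_values Z6_alice Z6_bob Z6_M. v \<le> 6 * (1 + 2 * sqrt 2))
    \<and> (6 * sqrt 15) / (6 * (1 + 2 * sqrt 2)) = (sqrt 120 - sqrt 15) / 7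
    \<and> (sqrt 120 - sqrt 15) / 7 > 1"
proof -
  have alice: "\<forall>x\<in>Z6_alice. observable 4 (alice_opt x)"
    and bob: "\<forall>y\<in>Z6_bob. observable 4 (bob_opt y)"
    using alice_opt_observable bob_opt_observable by blast+
  have attained: "6 * sqrt 15 \<in> quantum_values Z6_alice Z6_bob Z6_M"
    unfolding quantum_values_def mem_Collect_eq
    using Z6_quantum_attained psi_max4_unit alice bob
    by (intro exI[of _ 4] exI[of _ psi_max4] exI[of _ alice_opt] exI[of _ bob_opt]) auto
  have "v \<le> 6 * sqrt 15" if "v \<in> quantum_values Z6_alice Z6_bob Z6_M" for v
    using that Z6_quantum_bound unfolding quantum_values_def by blast
  then have "quantum_value Z6_alice Z6_bob Z6_M = 6 * sqrt 15"
    unfolding quantum_value_def by (rule cSup_eq_maximum[OF attained])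
  moreover have "\<forall>v\<in>qubit_values Z6_alice Z6_bob Z6_M. v \<le> 6 * (1 + 2 * sqrt 2)"
    unfolding qubit_values_def using Z6_qubit_bound by blast
  ultimately show ?thesis
    using Z6_classical_value Z6_quantum_attained alice bob Z6_qubit_attained Z6_ratio by blast
qed

end
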